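(* For every $n\ge0$ and every $\phi\ge0$, $$v_\infty(\phi)\le v_n(\phi)\le v_\infty(\phi)+\frac1c\Big(\frac{\lambda_0}{\lambda+\lambda_0}\Big)^n.$$ In particular $v_n\to v_\infty$ uniformly on $\mathbb R_+$.
   Context: Fix constants $\lambda,\lambda_0,\lambda_1\in(0,\infty)$, $\mu\in\mathbb R\setminus\{0\}$, $c>0$. Let $(E,\mathcal E)$ be a measurable space with probability measures $\nu_0,\nu_1$, $\nu_1\ll\nu_0$, $f:=d\nu_1/d\nu_0$. On $(\Omega,\mathcal F,\mathbb P_0)$ let $X$ be a standard Wiener process and, independent of it, $(T_n,Z_n)_{n\ge1}$ a marked point process whose arrivals form a Poisson process of rate $\lambda_0$ and whose marks are i.i.d. $\nu_0$, independent of the arrivals. $\mathbb F^X$ is the filtration generated by $X$. Let $L_t=\exp\{\mu X_t-(\mu^2/2+\lambda_1-\lambda_0)t\}\prod_{n:\,T_n\le t}\frac{\lambda_1}{\lambda_0}f(Z_n)$; for $\phi\ge0$, $\Phi_t=\phi e^{\lambda t}L_t+\int_0^t\lambda e^{\lambda(t-s)}\frac{L_t}{L_s}ds$, with $\mathbb E_0^\phi$ the expectation when $\Phi_0=\phi$. Let $g(\phi)=\phi-\lambda/c$. For bounded Borel $w$, $(Jw)(\phi)=\inf_{\tau}\mathbb E_0^\phi\big[\int_0^{\tau\wedge T_1}e^{-\lambda t}g(\Phi_t)dt+\mathbf 1_{\{\tau\ge T_1\}}e^{-\lambda T_1}w(\Phi_{T_1})\big]$, infimum over $\mathbb F^X$-stopping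 times $\tau$. Define $v_0\equiv0$, $v_{n+1}=Jv_n$ for $n\ge0$; the sequence is pointwise nonincreasing and $v_\infty$ denotes its pointwise limit. *)

theory Defs
  imports "HOL-Probability.Probability"
begin

definition indep_rv :: "'w measure \<Rightarrow> 'a measure \<Rightarrow> ('w \<Rightarrow> 'a) \<Rightarrow> 'b measure \<Rightarrow> ('w \<Rightarrow> 'b) \<Rightarrow> bool" where
  "indep_rv M Ma A Mb B \<longleftrightarrow>
     A \<in> measurable M Ma \<and> B \<in> measurable M Mb \<and>
     prob_space.indep_set M (sets (vimage_algebra (space M) A Ma)) (sets (vimage_algebra (space M) B Mb))"

definition wiener_process :: "'w measure \<Rightarrow> (real \<Rightarrow> 'w \<Rightarrow> real) \<Rightarrow> bool" where
  "wiener_process M X \<longleftrightarrow>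
     prob_space M \<and>
     (\<forall>t\<ge>0. X t \<in> borel_measurable M) \<and>
     (\<forall>\<omega>\<in>space M. X 0 \<omega> = 0 \<and> continuous_on {0..} (\<lambda>t. X t \<omega>)) \<and>
     (\<forall>s t. 0 \<le> s \<and> s < t \<longrightarrow>
        distributed M lborel (\<lambda>\<omega>. X t \<omega> - X s \<omega>)
          (\<lambda>x. ennreal (normal_density 0 (sqrt (t - s)) x))) \<and>
     (\<forall>(ts :: nat \<Rightarrow> real) n. 0 \<le> ts 0 \<and> (\<forall>i<n. ts i < ts (Suc i)) \<longrightarrow>
        prob_space.indep_vars M (\<lambda>_. borel) (\<lambda>i \<omega>. X (ts (Suc i)) \<omega> - X (ts i) \<omega>) {..<n})"

text \<open>Z 0 is unused.\<close>
definition marked_poisson ::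
  "'w measure \<Rightarrow> real \<Rightarrow> 'e measure \<Rightarrow> (nat \<Rightarrow> 'w \<Rightarrow> real) \<Rightarrow> (nat \<Rightarrow> 'w \<Rightarrow> 'e) \<Rightarrow> bool" where
  "marked_poisson M l \<nu> T Z \<longleftrightarrow>
     (\<forall>\<omega>\<in>space M. T 0 \<omega> = 0) \<and>
     (\<forall>n. distributed M lborel (\<lambda>\<omega>. T (Suc n) \<omega> - T n \<omega>)
            (\<lambda>x. ennreal (exponential_density l x))) \<and>
     prob_space.indep_vars M (\<lambda>_. borel) (\<lambda>n \<omega>. T (Suc n) \<omega> - T n \<omega>) UNIV \<and>
     (\<forall>n\<ge>1. Z n \<in> measurable M \<nu> \<and> distr M \<nu> (Z n) = \<nu>) \<and>
     prob_space.indep_vars M (\<lambda>_. \<nu>) Z {1..} \<and>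
     indep_rv M
        (PiM UNIV (\<lambda>_. borel)) (\<lambda>\<omega> n. T (Suc n) \<omega> - T n \<omega>)
        (PiM {1..} (\<lambda>_. \<nu>)) (\<lambda>\<omega>. restrict (\<lambda>n. Z n \<omega>) {1..})"

definition nat_filtration :: "'w measure \<Rightarrow> (real \<Rightarrow> 'w \<Rightarrow> real) \<Rightarrow> real \<Rightarrow> 'w measure" where
  "nat_filtration M X t =
     sigma (space M) {X s -` B \<inter> space M | s B. 0 \<le> s \<and> s \<le> t \<and> B \<in> sets borel}"

definition FX_stopping_time :: "'w measure \<Rightarrow> (real \<Rightarrow> 'w \<Rightarrow> real) \<Rightarrow> ('w \<Rightarrow> ereal) \<Rightarrow> bool" where
  "FX_stopping_time M X \<tau> \<longleftrightarrow>
     (\<forall>\<omega>\<in>space M. 0 \<le> \<tau> \<omega>) \<and>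
     (\<forall>t\<ge>0. {\<omega>\<in>space M. \<tau> \<omega> \<le> ereal t} \<in> sets (nat_filtration M X t))"

definition Lproc ::
  "real \<Rightarrow> real \<Rightarrow> real \<Rightarrow> ('e \<Rightarrow> real) \<Rightarrow> (real \<Rightarrow> 'w \<Rightarrow> real) \<Rightarrow> (nat \<Rightarrow> 'w \<Rightarrow> real)
    \<Rightarrow> (nat \<Rightarrow> 'w \<Rightarrow> 'e) \<Rightarrow> real \<Rightarrow> 'w \<Rightarrow> real" where
  "Lproc \<mu> l0 l1 f X T Z t \<omega> =
     exp (\<mu> * X t \<omega> - (\<mu>\<^sup>2 / 2 + l1 - l0) * t) *
     (\<Prod>n\<in>{n. 1 \<le> n \<and> T n \<omega> \<le> t}. l1 / l0 * f (Z n \<omega>))"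

text \<open>The ratio L_t / L_s (s \<le> t), written out as the multiplicative increment of L on (s,t].\<close>
definition Lratio ::
  "real \<Rightarrow> real \<Rightarrow> real \<Rightarrow> ('e \<Rightarrow> real) \<Rightarrow> (real \<Rightarrow> 'w \<Rightarrow> real) \<Rightarrow> (nat \<Rightarrow> 'w \<Rightarrow> real)
    \<Rightarrow> (nat \<Rightarrow> 'w \<Rightarrow> 'e) \<Rightarrow> real \<Rightarrow> real \<Rightarrow> 'w \<Rightarrow> real" where
  "Lratio \<mu> l0 l1 f X T Z s t \<omega> =
     exp (\<mu> * (X t \<omega> - X s \<omega>) - (\<mu>\<^sup>2 / 2 + l1 - l0) * (t - s)) *
     (\<Prod>n\<in>{n. 1 \<le> n \<and> s < T n \<omega> \<and> T n \<omega> \<le> t}. l1 / l0 * f (Z n \<omega>))"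

definition Phi ::
  "real \<Rightarrow> real \<Rightarrow> real \<Rightarrow> real \<Rightarrow> ('e \<Rightarrow> real) \<Rightarrow> (real \<Rightarrow> 'w \<Rightarrow> real) \<Rightarrow> (nat \<Rightarrow> 'w \<Rightarrow> real)
    \<Rightarrow> (nat \<Rightarrow> 'w \<Rightarrow> 'e) \<Rightarrow> real \<Rightarrow> real \<Rightarrow> 'w \<Rightarrow> real" where
  "Phi lam \<mu> l0 l1 f X T Z \<phi> t \<omega> =
     \<phi> * exp (lam * t) * Lproc \<mu> l0 l1 f X T Z t \<omega> +
     (LINT s:{0..t}|lborel. lam * exp (lam * (t - s)) * Lratio \<mu> l0 l1 f X T Z s t \<omega>)"

text \<open>Extended-real expectation E[Y] = E[Y^+] - E[Y^-] (well defined whenever E[Y^-] < \<infinity>).\<close>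
definition ext_expectation :: "'w measure \<Rightarrow> ('w \<Rightarrow> real) \<Rightarrow> ereal" where
  "ext_expectation M Y =
     enn2ereal (\<integral>\<^sup>+\<omega>. ennreal (Y \<omega>) \<partial>M) - enn2ereal (\<integral>\<^sup>+\<omega>. ennreal (- Y \<omega>) \<partial>M)"

definition Jop ::
  "'w measure \<Rightarrow> real \<Rightarrow> real \<Rightarrow> real \<Rightarrow> real \<Rightarrow> real \<Rightarrow> ('e \<Rightarrow> real) \<Rightarrow> (real \<Rightarrow> 'w \<Rightarrow> real)
    \<Rightarrow> (nat \<Rightarrow> 'w \<Rightarrow> real) \<Rightarrow> (nat \<Rightarrow> 'w \<Rightarrow> 'e) \<Rightarrow> (real \<Rightarrow> real) \<Rightarrow> real \<Rightarrow> real" where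
  "Jop M lam \<mu> l0 l1 c f X T Z w \<phi> =
     real_of_ereal (INF \<tau>\<in>{\<tau>. FX_stopping_time M X \<tau>}.
       ext_expectation M (\<lambda>\<omega>.
         (LINT t:{0..real_of_ereal (min (\<tau> \<omega>) (ereal (T 1 \<omega>)))}|lborel.
            exp (- lam * t) * (Phi lam \<mu> l0 l1 f X T Z \<phi> t \<omega> - lam / c)) +
         (if ereal (T 1 \<omega>) \<le> \<tau> \<omega>
          then exp (- lam * T 1 \<omega>) * w (Phi lam \<mu> l0 l1 f X T Z \<phi> (T 1 \<omega>) \<omega>)
          else 0)))"

end

theory Submission
  imports Defs
begin

(* Call a function w admissible if it is nondecreasing on [0,\<infinity>) and
   -1/c \<le> w \<le> 0 there.  Two properties of the operator J drive the whole argument: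
   (i)  J maps admissible functions to admissible functions: the running cost
        \<Phi> - lam/c \<ge> -lam/c integrates against e^{-lam t} to at least -1/c, stopping at
        once shows J w \<le> 0, and \<Phi> is nondecreasing in its initial value \<phi>;
   (ii) J is a one-sided contraction: if w1 \<le> w2 + \<delta> on [0,\<infinity>) then
        J w1 \<le> J w2 + q \<delta> with q = E[e^{-lam T1}] = l0/(lam + l0), T1 being Exp(l0).
   The file first proves, for an abstract operator satisfying (i) and (ii) (locale
   one_sided_contraction), that the iterates J^n 0 decrease to a limit with error at most
   K q^n, uniformly.  It then collects two measurability facts, properties of the
   extended expectation and a few real integrals, and finally establishes (i) and (ii)
   for the concrete operator Jop in the locale disorder_model.  Monotonicity of admissible functions is what makes
   w(\<Phi>_{T1}) measurable, which the additivity of the expectation in (ii) requires. *)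

locale one_sided_contraction =
  fixes J :: "('a \<Rightarrow> real) \<Rightarrow> 'a \<Rightarrow> real" and W :: "('a \<Rightarrow> real) set"
    and S :: "'a set" and K q :: real
  assumes zero_in_W: "(\<lambda>_. 0) \<in> W"
    and J_closed: "w \<in> W \<Longrightarrow> J w \<in> W"
    and W_bounds: "w \<in> W \<Longrightarrow> x \<in> S \<Longrightarrow> - K \<le> w x \<and> w x \<le> 0"
    and J_shift: "w1 \<in> W \<Longrightarrow> w2 \<in> W \<Longrightarrow> 0 \<le> \<delta> \<Longrightarrow> (\<And>y. y \<in> S \<Longrightarrow> w1 y \<le> w2 y + \<delta>) \<Longrightarrow>
        x \<in> S \<Longrightarrow> J w1 x \<le> J w2 x + q * \<delta>"
    and K_nonneg: "0 \<le> K" and q_nonneg: "0 \<le> q" and q_less_1: "q < 1"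
begin

abbreviation iterate :: "nat \<Rightarrow> 'a \<Rightarrow> real" where
  "iterate n \<equiv> (J ^^ n) (\<lambda>_. 0)"

lemma iterate_in_W: "iterate n \<in> W"
  by (induction n) (simp_all add: zero_in_W J_closed)

(* They decrease: J 0 \<le> 0, and J preserves the order (contraction with \<delta> = 0). *)
lemma iterate_Suc_le: "x \<in> S \<Longrightarrow> iterate (Suc n) x \<le> iterate n x"
proof (induction n arbitrary: x)
  case 0
  then show ?case using W_bounds[OF iterate_in_W[of 1]] by simp
next
  case (Suc n)
  have "J (iterate (Suc n)) x \<le> J (iterate n) x + q * 0"
    by (rule J_shift[OF iterate_in_W iterate_in_W]) (use Suc in auto)
  then show ?case by simp
qed

(* The gap between the n-th and any later iterate is at most K q^n: it is at most K
   initially, and each application of J multiplies it by q. *)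
lemma iterate_gap: "x \<in> S \<Longrightarrow> iterate n x \<le> iterate (n + m) x + K * q ^ n"
proof (induction n arbitrary: x)
  case 0
  then show ?case using W_bounds[OF iterate_in_W[of m] 0] by simp
next
  case (Suc n)
  have "J (iterate n) x \<le> J (iterate (n + m)) x + q * (K * q ^ n)"
    by (rule J_shift[OF iterate_in_W iterate_in_W])
      (use Suc K_nonneg q_nonneg in auto)
  then show ?case by (simp add: algebra_simps)
qed

lemma iterate_converges:
  assumes "x \<in> S"
  shows "(\<lambda>n. iterate n x) \<longlonglongrightarrow> lim (\<lambda>n. iterate n x)" and "lim (\<lambda>n. iterate n x) \<le> iterate n x"
proof -
  have "decseq (\<lambda>n. iterate n x)" using iterate_Suc_le assms by (intro decseq_SucI) auto
  moreover have "\<And>n. - K \<le> iterate n x" using W_bounds[OF iterate_in_W assms] by simp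
  ultimately obtain L where L: "(\<lambda>n. iterate n x) \<longlonglongrightarrow> L" "\<And>n. L \<le> iterate n x"
    using decseq_convergent[of "\<lambda>n. iterate n x" "- K"] by blast
  then show "(\<lambda>n. iterate n x) \<longlonglongrightarrow> lim (\<lambda>n. iterate n x)" "lim (\<lambda>n. iterate n x) \<le> iterate n x"
    by (simp_all add: limI)
qed

lemma iterate_error_bound:
  assumes "x \<in> S"
  shows "iterate n x \<le> lim (\<lambda>n. iterate n x) + K * q ^ n"
proof -
  have "(\<lambda>m. iterate (n + m) x + K * q ^ n) \<longlonglongrightarrow> lim (\<lambda>n. iterate n x) + K * q ^ n"
    using LIMSEQ_ignore_initial_segment[OF iterate_converges(1)[OF assms], of n]
    by (intro tendsto_add tendsto_const) (simp add: add.commute)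
  then show ?thesis by (rule LIMSEQ_le_const) (use iterate_gap assms in blast)
qed

(* The error bound does not depend on x, so the convergence is uniform on S. *)
lemma iterate_uniform_limit: "uniform_limit S iterate (\<lambda>x. lim (\<lambda>n. iterate n x)) sequentially"
  unfolding uniform_limit_iff
proof (intro allI impI)
  fix e :: real assume e: "0 < e"
  have "(\<lambda>n. K * q ^ n) \<longlonglongrightarrow> K * 0"
    by (intro tendsto_mult tendsto_const LIMSEQ_power_zero) (use q_nonneg q_less_1 in auto)
  then have "\<forall>\<^sub>F n in sequentially. K * q ^ n < e" using e by (simp add: order_tendsto_iff)
  then show "\<forall>\<^sub>F n in sequentially. \<forall>x\<in>S. dist (iterate n x) (lim (\<lambda>n. iterate n x)) < e"
  proof eventually_elim
    case (elim n)
    show ?case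
    proof
      fix x assume x: "x \<in> S"
      have "dist (iterate n x) (lim (\<lambda>n. iterate n x)) = iterate n x - lim (\<lambda>n. iterate n x)"
        using iterate_converges(2)[OF x] by (simp add: dist_real_def)
      also have "\<dots> \<le> K * q ^ n" using iterate_error_bound[OF x, of n] by simp
      finally show "dist (iterate n x) (lim (\<lambda>n. iterate n x)) < e" using elim by simp
    qed
  qed
qed

end

(* A product over the (possibly infinite) set of indices n \<ge> 1 selected by measurable
   predicates is measurable; an infinite product is 1 by convention. *)
lemma borel_measurable_prod_selected:
  fixes g :: "nat \<Rightarrow> 'a \<Rightarrow> real"
  assumes P[measurable]: "\<And>n. Measurable.pred N (P n)"
    and g: "\<And>n. n \<ge> 1 \<Longrightarrow> g n \<in> borel_measurable N"
  shows "(\<lambda>x. \<Prod>n\<in>{n. 1 \<le> n \<and> P n x}. g n x) \<in> borel_measurable N"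
proof -
  define h where "h K x = (\<Prod>n\<in>{1..<K}. if P n x then g n x else 1)" for K x
  define bound where "bound x = (LEAST K. \<forall>n\<ge>K. 1 \<le> n \<longrightarrow> \<not> P n x)" for x
  have finite_iff: "finite {n. 1 \<le> n \<and> P n x} \<longleftrightarrow> (\<exists>K. \<forall>n\<ge>K. 1 \<le> n \<longrightarrow> \<not> P n x)" for x
  proof
    assume "finite {n. 1 \<le> n \<and> P n x}"
    then obtain K where "\<forall>n\<in>{n. 1 \<le> n \<and> P n x}. n < K"
      using finite_nat_set_iff_bounded by blast
    then show "\<exists>K. \<forall>n\<ge>K. 1 \<le> n \<longrightarrow> \<not> P n x"
      by (metis (mono_tags, lifting) leD mem_Collect_eq)
  next
    assume "\<exists>K. \<forall>n\<ge>K. 1 \<le> n \<longrightarrow> \<not> P n x"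
    then obtain K where "\<forall>n\<ge>K. 1 \<le> n \<longrightarrow> \<not> P n x" by blast
    then have "{n. 1 \<le> n \<and> P n x} \<subseteq> {..<K}" by (auto simp: not_less[symmetric])
    then show "finite {n. 1 \<le> n \<and> P n x}" using finite_subset by blast
  qed
  have eq: "(\<Prod>n\<in>{n. 1 \<le> n \<and> P n x}. g n x) =
      (if \<exists>K. \<forall>n\<ge>K. 1 \<le> n \<longrightarrow> \<not> P n x then h (bound x) x else 1)" for x
  proof (cases "\<exists>K. \<forall>n\<ge>K. 1 \<le> n \<longrightarrow> \<not> P n x")
    case True
    then have "\<forall>n\<ge>bound x. 1 \<le> n \<longrightarrow> \<not> P n x"
      unfolding bound_def by (rule LeastI_ex)
    then have "{n. 1 \<le> n \<and> P n x} = {n\<in>{1..<bound x}. P n x}"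
      by (auto simp: not_less[symmetric])
    then have "(\<Prod>n\<in>{n. 1 \<le> n \<and> P n x}. g n x) = h (bound x) x"
      unfolding h_def by (simp only: prod.inter_filter[OF finite_atLeastLessThan])
    then show ?thesis using True by simp
  next
    case False
    then have "infinite {n. 1 \<le> n \<and> P n x}" using finite_iff[of x] by blast
    then show ?thesis by (subst if_not_P[OF False]) simp
  qed
  have [measurable]: "(\<lambda>x. h K x) \<in> borel_measurable N" for K
    unfolding h_def by (intro borel_measurable_prod) (auto intro!: measurable_If g)
  have "bound \<in> measurable N (count_space UNIV)" unfolding bound_def by measurable
  then have "(\<lambda>x. h (bound x) x) \<in> borel_measurable N"
    by (rule measurable_compose_countable'[rotated]) auto
  then have "(\<lambda>x. if \<exists>K. \<forall>n\<ge>K. 1 \<le> n \<longrightarrow> \<not> P n x then h (bound x) x else 1) \<in> borel_measurable N"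
    by measurable
  then show ?thesis by (simp only: eq)
qed

(* A real process that is measurable at each time t \<ge> 0 and has continuous paths on
   [0,\<infinity>) is jointly measurable in (t, \<omega>); it is approximated by its values on the
   grids (1/(k+1))\<int>. *)
lemma borel_measurable_continuous_process:
  fixes Y :: "real \<Rightarrow> 'a \<Rightarrow> real"
  assumes meas: "\<And>t. t \<ge> 0 \<Longrightarrow> Y t \<in> borel_measurable N"
    and cont: "\<And>\<omega>. \<omega> \<in> space N \<Longrightarrow> continuous_on {0..} (\<lambda>t. Y t \<omega>)"
  shows "(\<lambda>p. Y (max 0 (fst p)) (snd p)) \<in> borel_measurable ((borel :: real measure) \<Otimes>\<^sub>M N)"
proof (rule borel_measurable_LIMSEQ_real)
  define grid where "grid k t = real_of_int \<lceil>t * real (Suc k)\<rceil> / real (Suc k)" for k t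
  show "(\<lambda>p. Y (max 0 (grid k (fst p))) (snd p)) \<in> borel_measurable (borel \<Otimes>\<^sub>M N)" for k
    unfolding grid_def
  proof (rule measurable_compose_countable'[where I=UNIV and g="\<lambda>p. \<lceil>fst p * real (Suc k)\<rceil>"
        and f="\<lambda>j p. Y (max 0 (real_of_int j / real (Suc k))) (snd p)"])
    show "(\<lambda>p. Y (max 0 (real_of_int j / real (Suc k))) (snd p)) \<in> borel_measurable (borel \<Otimes>\<^sub>M N)" for j
      using measurable_comp[OF measurable_snd meas[of "max 0 (real_of_int j / real (Suc k))"]]
      by (simp add: comp_def)
  qed auto
  fix p assume "p \<in> space ((borel :: real measure) \<Otimes>\<^sub>M N)"
  then obtain t \<omega> where p: "p = (t, \<omega>)" and \<omega>: "\<omega> \<in> space N"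
    by (cases p) (auto simp: space_pair_measure)
  have "(\<lambda>k. grid k t) \<longlonglongrightarrow> t"
  proof (rule tendsto_sandwich[where f="\<lambda>_. t" and h="\<lambda>k. t + 1 / real (Suc k)"])
    show "\<forall>\<^sub>F k in sequentially. t \<le> grid k t"
      by (intro always_eventually allI) (simp add: grid_def field_simps le_of_int_ceiling)
    have "real_of_int \<lceil>t * real (Suc k)\<rceil> \<le> t * real (Suc k) + 1" for k
      by linarith
    then show "\<forall>\<^sub>F k in sequentially. grid k t \<le> t + 1 / real (Suc k)"
      by (intro always_eventually allI)
        (simp add: grid_def divide_le_eq add_divide_distrib distrib_right del: of_nat_Suc)
    show "(\<lambda>k. t + 1 / real (Suc k)) \<longlonglongrightarrow> t"
      using tendsto_add[OF tendsto_const[of t] LIMSEQ_inverse_real_of_nat]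
      by (simp add: inverse_eq_divide)
  qed simp
  then have "(\<lambda>k. max 0 (grid k t)) \<longlonglongrightarrow> max 0 t"
    by (intro tendsto_max tendsto_const)
  then have "(\<lambda>k. Y (max 0 (grid k t)) \<omega>) \<longlonglongrightarrow> Y (max 0 t) \<omega>"
    by (rule continuous_on_tendsto_compose[OF cont[OF \<omega>]]) auto
  then show "(\<lambda>k. Y (max 0 (grid k (fst p))) (snd p)) \<longlonglongrightarrow> Y (max 0 (fst p)) (snd p)"
    by (simp add: p)
qed

context prob_space
begin

lemma ext_expectation_cong_AE:
  assumes "AE x in M. Y1 x = Y2 x"
  shows "ext_expectation M Y1 = ext_expectation M Y2"
proof -
  have "(\<integral>\<^sup>+x. ennreal (Y1 x) \<partial>M) = (\<integral>\<^sup>+x. ennreal (Y2 x) \<partial>M)"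
    "(\<integral>\<^sup>+x. ennreal (- Y1 x) \<partial>M) = (\<integral>\<^sup>+x. ennreal (- Y2 x) \<partial>M)"
    by (rule nn_integral_cong_AE, rule AE_mp[OF assms], simp)+
  then show ?thesis unfolding ext_expectation_def by simp
qed

lemma nn_integral_negative_part_le:
  assumes "AE x in M. - K \<le> Y x" "0 \<le> K"
  shows "enn2ereal (\<integral>\<^sup>+x. ennreal (- Y x) \<partial>M) \<le> ereal K"
proof -
  have "(\<integral>\<^sup>+x. ennreal (- Y x) \<partial>M) \<le> (\<integral>\<^sup>+x. ennreal K \<partial>M)"
    by (rule nn_integral_mono_AE) (rule AE_mp[OF assms(1)], auto intro!: ennreal_leI)
  also have "\<dots> = ennreal K" by (simp add: emeasure_space_1)
  finally show ?thesis using assms(2) by (simp add: less_eq_ennreal.rep_eq)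
qed

lemma ext_expectation_lower_bound:
  assumes "AE x in M. - K \<le> Y x" "0 \<le> K"
  shows "- ereal K \<le> ext_expectation M Y"
proof -
  have "ereal 0 - ereal K \<le> ext_expectation M Y"
    unfolding ext_expectation_def
    by (intro ereal_minus_mono nn_integral_negative_part_le[OF assms])
      (metis enn2ereal_nonneg zero_ereal_def)
  then show ?thesis by simp
qed

lemma ext_expectation_mono_AE:
  assumes "AE x in M. Y1 x \<le> Y2 x"
  shows "ext_expectation M Y1 \<le> ext_expectation M Y2"
proof -
  have "(\<integral>\<^sup>+x. ennreal (Y1 x) \<partial>M) \<le> (\<integral>\<^sup>+x. ennreal (Y2 x) \<partial>M)"
    "(\<integral>\<^sup>+x. ennreal (- Y2 x) \<partial>M) \<le> (\<integral>\<^sup>+x. ennreal (- Y1 x) \<partial>M)"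
    by (rule nn_integral_mono_AE, rule AE_mp[OF assms], auto intro!: ennreal_leI)+
  then show ?thesis unfolding ext_expectation_def
    by (intro ereal_minus_mono) (simp_all add: less_eq_ennreal.rep_eq)
qed

lemma ext_expectation_integrable:
  assumes "integrable M Y"
  shows "ext_expectation M Y = ereal (integral\<^sup>L M Y)"
proof -
  from integrableE[OF assms] obtain r q where rq: "0 \<le> r" "0 \<le> q"
    "(\<integral>\<^sup>+x. ennreal (Y x)\<partial>M) = ennreal r" "(\<integral>\<^sup>+x. ennreal (-Y x)\<partial>M) = ennreal q"
    "integral\<^sup>L M Y = r - q" by metis
  then show ?thesis unfolding ext_expectation_def by simp
qed

lemma ext_expectation_le_add:
  assumes [measurable]: "Y1 \<in> borel_measurable M" "Y2 \<in> borel_measurable M" "h \<in> borel_measurable M"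
    and le: "AE x in M. Y1 x \<le> Y2 x + h x" and h_nonneg: "AE x in M. 0 \<le> h x"
    and h_int: "integrable M h"
    and lb1: "AE x in M. - K \<le> Y1 x" and lb2: "AE x in M. - K \<le> Y2 x" and K: "0 \<le> K"
  shows "ext_expectation M Y1 \<le> ext_expectation M Y2 + ereal (integral\<^sup>L M h)"
proof (cases "(\<integral>\<^sup>+x. ennreal (Y2 x) \<partial>M) = \<infinity>")
  case True
  have "enn2ereal (\<integral>\<^sup>+x. ennreal (- Y2 x) \<partial>M) \<le> ereal K"
    by (rule nn_integral_negative_part_le[OF lb2 K])
  then have "ext_expectation M Y2 = \<infinity>" unfolding ext_expectation_def True
    by (cases "enn2ereal (\<integral>\<^sup>+x. ennreal (- Y2 x) \<partial>M)") (auto simp: infinity_ennreal_def)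
  then show ?thesis by simp
next
  case False
  have "enn2ereal (\<integral>\<^sup>+x. ennreal (- Y2 x) \<partial>M) \<le> ereal K"
    by (rule nn_integral_negative_part_le[OF lb2 K])
  then have "(\<integral>\<^sup>+x. ennreal (- Y2 x) \<partial>M) \<noteq> \<infinity>"
    by (metis PInfty_neq_ereal(1) enn2ereal_top ereal_infty_less_eq(1) infinity_ennreal_def)
  then have int2: "integrable M Y2" using False by (simp add: real_integrable_def)
  have "integrable M (\<lambda>x. \<bar>Y2 x\<bar> + h x + K)"
    by (intro Bochner_Integration.integrable_add integrable_abs int2 h_int integrable_const)
  then have int1: "integrable M Y1"
  proof (rule Bochner_Integration.integrable_bound)
    show "AE x in M. norm (Y1 x) \<le> norm (\<bar>Y2 x\<bar> + h x + K)"
      using le h_nonneg lb1 by eventually_elim (use K in auto)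
  qed measurable
  have "integral\<^sup>L M Y1 \<le> integral\<^sup>L M (\<lambda>x. Y2 x + h x)"
    using int1 int2 h_int by (intro integral_mono_AE le) auto
  also have "\<dots> = integral\<^sup>L M Y2 + integral\<^sup>L M h" using int2 h_int by simp
  finally show ?thesis
    using ext_expectation_integrable[OF int1] ext_expectation_integrable[OF int2] by simp
qed

end

lemma set_integral_exp_neg:
  fixes lam a :: real
  assumes lam: "lam > 0" and a: "a \<ge> 0"
  shows "(LINT t:{0..a}|lborel. exp (- lam * t)) = (1 - exp (- lam * a)) / lam"
proof -
  have "(LBINT t=ereal 0..ereal a. exp (- lam * t)) =
      (\<lambda>t. - exp (- lam * t) / lam) a - (\<lambda>t. - exp (- lam * t) / lam) 0"
  proof (rule interval_integral_FTC_finite)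
    show "continuous_on {min 0 a..max 0 a} (\<lambda>t. exp (- lam * t))" by (intro continuous_intros)
    fix x
    have "((\<lambda>t. - exp (- lam * t) / lam) has_real_derivative exp (- lam * x)) (at x)"
      using lam by (auto intro!: derivative_eq_intros)
    then show "((\<lambda>t. - exp (- lam * t) / lam) has_vector_derivative exp (- lam * x))
        (at x within {min 0 a..max 0 a})"
      by (simp add: has_real_derivative_iff_has_vector_derivative[symmetric] has_field_derivative_at_within)
  qed
  then show ?thesis using a by (simp add: interval_integral_Icc diff_divide_distrib)
qed

(* Since P \<ge> 0, the discounted running cost P - lam/c over [0,a] is at least
   -(1 - e^{-lam a})/c; a non-integrable integrand has integral 0, which is also fine. *)
lemma discounted_cost_lower_bound:
  fixes lam c a :: real and P :: "real \<Rightarrow> real"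
  assumes lam: "lam > 0" and c: "c > 0" and a: "a \<ge> 0" and P: "\<And>t. t \<in> {0..a} \<Longrightarrow> 0 \<le> P t"
  shows "- (1 / c) * (1 - exp (- lam * a)) \<le> (LINT t:{0..a}|lborel. exp (- lam * t) * (P t - lam / c))"
proof (cases "set_integrable lborel {0..a} (\<lambda>t. exp (- lam * t) * (P t - lam / c))")
  case True
  have "set_integrable lborel {0..a} (\<lambda>t. exp (- lam * t) * (- lam / c))"
    unfolding set_integrable_def
    by (rule borel_integrable_compact) (use c in \<open>auto intro!: continuous_intros\<close>)
  then have "(LINT t:{0..a}|lborel. exp (- lam * t) * (- lam / c))
      \<le> (LINT t:{0..a}|lborel. exp (- lam * t) * (P t - lam / c))"
    by (intro set_integral_mono True mult_left_mono) (auto intro: P)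
  moreover have "(LINT t:{0..a}|lborel. exp (- lam * t) * (- lam / c))
      = (LINT t:{0..a}|lborel. exp (- lam * t)) * (- lam / c)"
    by (rule set_integral_mult_left)
  moreover have "(LINT t:{0..a}|lborel. exp (- lam * t)) * (- lam / c) = - (1 / c) * (1 - exp (- lam * a))"
    unfolding set_integral_exp_neg[OF lam a] using lam c by (simp add: field_simps)
  ultimately show ?thesis by linarith
next
  case False
  then have "(LINT t:{0..a}|lborel. exp (- lam * t) * (P t - lam / c)) = 0"
    unfolding set_lebesgue_integral_def set_integrable_def by (simp add: not_integrable_integral_eq)
  moreover have "exp (- lam * a) \<le> 1" using lam a by simp
  ultimately show ?thesis using c by simp
qed

lemma set_integral_le_const_length:
  fixes F :: "real \<Rightarrow> real"
  assumes t: "0 \<le> t" and F: "\<And>s. s \<in> {0..t} \<Longrightarrow> 0 \<le> F s \<and> F s \<le> K"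
  shows "(LINT s:{0..t}|lborel. F s) \<le> K * t"
proof (cases "set_integrable lborel {0..t} F")
  case True
  have "set_integrable lborel {0..t} (\<lambda>_. K)"
    unfolding set_integrable_def by (rule borel_integrable_compact) auto
  then have "(LINT s:{0..t}|lborel. F s) \<le> (LINT s:{0..t}|lborel. K)"
    using True F by (intro set_integral_mono) auto
  also have "\<dots> = K * t" using t by (simp add: set_integral_const)
  finally show ?thesis .
next
  case False
  then have "(LINT s:{0..t}|lborel. F s) = 0"
    unfolding set_lebesgue_integral_def set_integrable_def by (simp add: not_integrable_integral_eq)
  moreover have "0 \<le> K" using F[of 0] t by auto
  ultimately show ?thesis using t by simp
qed

lemma set_integral_nonneg_real:
  fixes F :: "real \<Rightarrow> real"
  assumes "\<And>s. s \<in> S \<Longrightarrow> 0 \<le> F s"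
  shows "0 \<le> (LINT s:S|lborel. F s)"
  unfolding set_lebesgue_integral_def
  by (rule integral_nonneg_AE) (auto split: split_indicator intro: assms)

lemma linear_exponent_bound:
  fixes m \<kappa> xt xs B s t H :: real
  assumes "\<bar>xt\<bar> \<le> B" "\<bar>xs\<bar> \<le> B" "0 \<le> s" "s \<le> t" "t \<le> H"
  shows "m * (xt - xs) - \<kappa> * (t - s) \<le> 2 * \<bar>m\<bar> * B + \<bar>\<kappa>\<bar> * H"
proof -
  have "m * (xt - xs) \<le> \<bar>m\<bar> * \<bar>xt - xs\<bar>" by (metis abs_ge_self abs_mult)
  also have "\<dots> \<le> \<bar>m\<bar> * (2 * B)" using assms by (intro mult_left_mono) auto
  finally have "m * (xt - xs) \<le> 2 * \<bar>m\<bar> * B" by simp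
  moreover have "- \<kappa> * (t - s) \<le> \<bar>\<kappa>\<bar> * \<bar>t - s\<bar>" by (metis abs_ge_self abs_minus_cancel abs_mult)
  moreover have "\<bar>\<kappa>\<bar> * \<bar>t - s\<bar> \<le> \<bar>\<kappa>\<bar> * H" using assms by (intro mult_left_mono) auto
  ultimately show ?thesis by linarith
qed

lemma prod_subset_singleton_le:
  fixes g :: "nat \<Rightarrow> real"
  assumes "S \<subseteq> {k}" "\<And>n. 0 \<le> g n"
  shows "0 \<le> prod g S \<and> prod g S \<le> max 1 (g k)"
  using assms by (cases "S = {}") (auto dest: subset_singletonD)

lemma ereal_le_plus_real_iff: "(x::ereal) \<le> y + ereal r \<longleftrightarrow> x - ereal r \<le> y"
  by (cases x; cases y) auto

lemma ereal_between_real: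
  assumes "- ereal K \<le> I" "I \<le> 0"
  shows "I = ereal (real_of_ereal I)" "- K \<le> real_of_ereal I" "real_of_ereal I \<le> 0"
  using assms by (cases I; auto)+

locale disorder_model =
  fixes M :: "'w measure" and \<nu>0 :: "'e measure"
    and X :: "real \<Rightarrow> 'w \<Rightarrow> real" and T :: "nat \<Rightarrow> 'w \<Rightarrow> real" and Z :: "nat \<Rightarrow> 'w \<Rightarrow> 'e"
    and lam l0 l1 \<mu> c :: real and f :: "'e \<Rightarrow> real"
  assumes lam: "lam > 0" and l0: "l0 > 0" and l1: "l1 > 0" and c: "c > 0"
    and f_nonneg: "\<And>x. f x \<ge> 0" and f_measurable: "f \<in> borel_measurable \<nu>0"
    and wiener: "wiener_process M X"
    and poisson: "marked_poisson M l0 \<nu>0 T Z"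
begin

sublocale prob_space M using wiener by (simp add: wiener_process_def)

abbreviation lik :: "real \<Rightarrow> 'w \<Rightarrow> real" where
  "lik \<equiv> Lproc \<mu> l0 l1 f X T Z"

abbreviation lik_ratio :: "real \<Rightarrow> real \<Rightarrow> 'w \<Rightarrow> real" where
  "lik_ratio \<equiv> Lratio \<mu> l0 l1 f X T Z"

abbreviation \<Phi> :: "real \<Rightarrow> real \<Rightarrow> 'w \<Rightarrow> real" where
  "\<Phi> \<equiv> Phi lam \<mu> l0 l1 f X T Z"

lemma X_measurable: "t \<ge> 0 \<Longrightarrow> X t \<in> borel_measurable M"
  using wiener by (simp add: wiener_process_def)

lemma X_start: "\<omega> \<in> space M \<Longrightarrow> X 0 \<omega> = 0"
  using wiener by (simp add: wiener_process_def)

lemma X_continuous: "\<omega> \<in> space M \<Longrightarrow> continuous_on {0..} (\<lambda>t. X t \<omega>)"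
  using wiener by (simp add: wiener_process_def)

lemma T_increment_distributed:
  "distributed M lborel (\<lambda>\<omega>. T (Suc n) \<omega> - T n \<omega>) (exponential_density l0)"
  using poisson by (simp add: marked_poisson_def)

lemma T_zero: "\<omega> \<in> space M \<Longrightarrow> T 0 \<omega> = 0"
  using poisson by (simp add: marked_poisson_def)

lemma T_measurable[measurable]: "T n \<in> borel_measurable M"
proof (induction n)
  case 0
  then show ?case using T_zero by (subst measurable_cong[where g="\<lambda>_. 0"]) auto
next
  case (Suc n)
  have "(\<lambda>\<omega>. T (Suc n) \<omega> - T n \<omega>) \<in> borel_measurable M"
    using distributed_measurable[OF T_increment_distributed] by simp
  then have "(\<lambda>\<omega>. (T (Suc n) \<omega> - T n \<omega>) + T n \<omega>) \<in> borel_measurable M"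
    using Suc by measurable
  then show ?case by simp
qed

lemma fZ_measurable[measurable]: "n \<ge> 1 \<Longrightarrow> (\<lambda>\<omega>. f (Z n \<omega>)) \<in> borel_measurable M"
  using poisson measurable_comp[of "Z n" M \<nu>0 f borel] f_measurable
  by (simp add: marked_poisson_def comp_def)

(* Measurability of the processes along measurable time changes; times are clamped at 0
   since X t is only known to be measurable for t \<ge> 0. *)
lemma X_compose_measurable[measurable]:
  assumes [measurable]: "h \<in> borel_measurable N" "k \<in> measurable N M"
  shows "(\<lambda>x. X (max 0 (h x)) (k x)) \<in> borel_measurable N"
proof -
  have "(\<lambda>x. (h x, k x)) \<in> measurable N ((borel :: real measure) \<Otimes>\<^sub>M M)" by measurable
  from measurable_comp[OF this borel_measurable_continuous_process[OF X_measurable X_continuous]]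
  show ?thesis by (simp add: comp_def)
qed

lemma T_compose_measurable[measurable]: "k \<in> measurable N M \<Longrightarrow> (\<lambda>x. T n (k x)) \<in> borel_measurable N"
  using measurable_comp[OF _ T_measurable] by (auto simp: comp_def)

lemma fZ_compose_measurable[measurable]:
  "k \<in> measurable N M \<Longrightarrow> n \<ge> 1 \<Longrightarrow> (\<lambda>x. f (Z n (k x))) \<in> borel_measurable N"
  using measurable_comp[OF _ fZ_measurable] by (auto simp: comp_def)

lemma lik_measurable[measurable]:
  assumes [measurable]: "h \<in> borel_measurable N" "k \<in> measurable N M"
  shows "(\<lambda>x. lik (max 0 (h x)) (k x)) \<in> borel_measurable N"
  unfolding Lproc_def
  by (intro borel_measurable_times borel_measurable_exp borel_measurable_prod_selected) measurable

lemma lik_ratio_measurable[measurable]: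
  assumes [measurable]: "h \<in> borel_measurable N" "h' \<in> borel_measurable N" "k \<in> measurable N M"
  shows "(\<lambda>x. lik_ratio (max 0 (h' x)) (max 0 (h x)) (k x)) \<in> borel_measurable N"
  unfolding Lratio_def
  by (intro borel_measurable_times borel_measurable_exp borel_measurable_prod_selected) measurable

lemma Phi_clamped: "\<Phi> \<phi> t \<omega> = \<phi> * exp (lam * t) * lik t \<omega> +
   (\<integral>s. indicator {0..t} s * (lam * exp (lam * (t - s)) * lik_ratio (max 0 s) t \<omega>) \<partial>lborel)"
  unfolding Phi_def set_lebesgue_integral_def
  by (intro arg_cong2[where f="(+)"] refl Bochner_Integration.integral_cong) (auto split: split_indicator)

lemma borel_measurable_pair_lborel:
  "borel_measurable (N \<Otimes>\<^sub>M lborel) = borel_measurable (N \<Otimes>\<^sub>M (borel :: real measure))"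
  by (rule measurable_cong_sets) (auto intro: sets_pair_measure_cong)

lemma Phi_measurable[measurable]:
  assumes [measurable]: "h \<in> borel_measurable N" "k \<in> measurable N M"
  shows "(\<lambda>x. \<Phi> \<phi> (max 0 (h x)) (k x)) \<in> borel_measurable N"
  unfolding Phi_clamped
proof (intro borel_measurable_add borel_measurable_times borel_measurable_exp lik_measurable)
  have [measurable]: "(\<lambda>y. lik_ratio (max 0 (snd y)) (max 0 (h (fst y))) (k (fst y)))
     \<in> borel_measurable (N \<Otimes>\<^sub>M borel)"
    by (rule lik_ratio_measurable) measurable
  have "(\<lambda>(x, s). indicator {0..max 0 (h x)} s *
      (lam * exp (lam * (max 0 (h x) - s)) * lik_ratio (max 0 s) (max 0 (h x)) (k x)))
     \<in> borel_measurable (N \<Otimes>\<^sub>M borel)"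
    unfolding split_beta' indicator_def atLeastAtMost_iff by measurable
  then show "(\<lambda>x. \<integral>s. indicator {0..max 0 (h x)} s *
      (lam * exp (lam * (max 0 (h x) - s)) * lik_ratio (max 0 s) (max 0 (h x)) (k x)) \<partial>lborel)
    \<in> borel_measurable N"
    by (intro lborel.borel_measurable_lebesgue_integral) (simp only: borel_measurable_pair_lborel)
qed measurable

lemma nat_filtration_subset: "sets (nat_filtration M X t) \<subseteq> sets M"
proof -
  let ?G = "{X s -` B \<inter> space M | s B. 0 \<le> s \<and> s \<le> t \<and> B \<in> sets borel}"
  have G: "?G \<subseteq> sets M" using X_measurable by (auto intro: measurable_sets)
  have "sets (nat_filtration M X t) = sigma_sets (space M) ?G"
    unfolding nat_filtration_def by (rule sets_measure_of) auto
  with sets.sigma_sets_subset[OF G] show ?thesis by simp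
qed

lemma stopping_time_nonneg: "FX_stopping_time M X \<tau> \<Longrightarrow> \<omega> \<in> space M \<Longrightarrow> 0 \<le> \<tau> \<omega>"
  by (simp add: FX_stopping_time_def)

lemma stopping_time_measurable:
  assumes st: "FX_stopping_time M X \<tau>"
  shows "\<tau> \<in> borel_measurable M"
proof (rule borel_measurableI_le)
  fix y :: ereal
  show "{x \<in> space M. \<tau> x \<le> y} \<in> sets M"
  proof (cases "y \<ge> 0")
    case True
    show ?thesis
    proof (cases y)
      case (real r)
      then have "{x \<in> space M. \<tau> x \<le> ereal r} \<in> sets (nat_filtration M X r)"
        using st True by (simp add: FX_stopping_time_def)
      then show ?thesis using nat_filtration_subset real by auto
    qed (use True in simp_all)
  next
    case False
    then have "{x \<in> space M. \<tau> x \<le> y} = {}"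
      using stopping_time_nonneg[OF st] by (auto dest: order_trans)
    then show ?thesis by (metis sets.empty_sets)
  qed
qed

lemma stopping_time_zero: "FX_stopping_time M X (\<lambda>_. 0)"
  unfolding FX_stopping_time_def nat_filtration_def by auto

(* Almost every path has strictly increasing arrival times, since the exponential
   interarrival times are a.s. positive. *)
definition strict_arrivals :: "'w \<Rightarrow> bool" where
  "strict_arrivals \<omega> \<longleftrightarrow> \<omega> \<in> space M \<and> strict_mono (\<lambda>n. T n \<omega>)"

lemma AE_strict_arrivals: "AE \<omega> in M. strict_arrivals \<omega>"
proof -
  have "AE \<omega> in M. 0 < T (Suc n) \<omega> - T n \<omega>" for n
  proof -
    have "prob {x \<in> space M. T (Suc n) x - T n x \<le> 0} = 1 - exp (- 0 * l0)"
      by (rule exponential_distributedD_le[OF T_increment_distributed]) (use l0 in auto)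
    then have "{x \<in> space M. T (Suc n) x - T n x \<le> 0} \<in> null_sets M"
      by (auto simp: null_sets_def emeasure_eq_measure)
    then show ?thesis by (rule AE_I') auto
  qed
  then have "AE \<omega> in M. \<forall>n. T n \<omega> < T (Suc n) \<omega>" by (simp add: AE_all_countable)
  then show ?thesis unfolding strict_arrivals_def
    by (rule AE_mp) (auto intro!: AE_I2 strict_monoI_Suc)
qed

lemma strict_arrivals_T_pos: "strict_arrivals \<omega> \<Longrightarrow> 1 \<le> n \<Longrightarrow> 0 < T n \<omega>"
  unfolding strict_arrivals_def using strict_monoD[of "\<lambda>n. T n \<omega>" 0 n] T_zero by auto

lemma strict_arrivals_T1_pos: "strict_arrivals \<omega> \<Longrightarrow> 0 < T 1 \<omega>"
  using strict_arrivals_T_pos by simp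

lemma arrivals_before_T1:
  assumes "strict_arrivals \<omega>" "t \<le> T 1 \<omega>"
  shows "{n. 1 \<le> n \<and> P n \<and> T n \<omega> \<le> t} \<subseteq> {1}"
proof
  fix n assume n: "n \<in> {n. 1 \<le> n \<and> P n \<and> T n \<omega> \<le> t}"
  have "\<not> 1 < n" using assms n strict_monoD[of "\<lambda>n. T n \<omega>" 1 n] unfolding strict_arrivals_def by auto
  with n show "n \<in> {1}" by simp
qed

(* E[e^{-lam T1}] = l0/(lam + l0): the Laplace transform of the Exp(l0) law. *)
lemma laplace_T1: "(\<integral>\<^sup>+\<omega>. ennreal (exp (- lam * T 1 \<omega>)) \<partial>M) = ennreal (l0 / (lam + l0))"
proof -
  have density: "exponential_density l0 x * exp (- lam * x) = l0 / (lam + l0) * exponential_density (lam + l0) x"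
    for x :: real
  proof (cases "x < 0")
    case False
    have "exp (- x * l0) * exp (- lam * x) = exp (- x * (lam + l0))"
      by (simp add: exp_add[symmetric] algebra_simps)
    then show ?thesis using False lam l0 by (simp add: exponential_density_def field_simps)
  qed (simp add: exponential_density_def)
  have "(\<integral>\<^sup>+\<omega>. ennreal (exp (- lam * T 1 \<omega>)) \<partial>M) =
      (\<integral>\<^sup>+\<omega>. ennreal (exp (- lam * (T (Suc 0) \<omega> - T 0 \<omega>))) \<partial>M)"
    by (intro nn_integral_cong) (simp add: T_zero)
  also have "\<dots> = (\<integral>\<^sup>+x. ennreal (exponential_density l0 x) * ennreal (exp (- lam * x)) \<partial>lborel)"
    by (rule distributed_nn_integral[OF T_increment_distributed, symmetric]) measurable
  also have "\<dots> = (\<integral>\<^sup>+x. ennreal (l0 / (lam + l0)) * ennreal (exponential_density (lam + l0) x) \<partial>lborel)"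
  proof (intro nn_integral_cong)
    fix x :: real
    have nonneg: "0 \<le> exponential_density l0 x" "0 \<le> exponential_density (lam + l0) x"
      "0 \<le> l0 / (lam + l0)"
      using lam l0 by (auto intro: exponential_density_nonneg)
    have "ennreal (exponential_density l0 x) * ennreal (exp (- lam * x))
        = ennreal (exponential_density l0 x * exp (- lam * x))"
      using nonneg by (simp add: ennreal_mult)
    also have "\<dots> = ennreal (l0 / (lam + l0)) * ennreal (exponential_density (lam + l0) x)"
      unfolding density by (rule ennreal_mult[OF nonneg(3,2)])
    finally show "ennreal (exponential_density l0 x) * ennreal (exp (- lam * x))
        = ennreal (l0 / (lam + l0)) * ennreal (exponential_density (lam + l0) x)" .
  qed
  also have "\<dots> = ennreal (l0 / (lam + l0)) * (\<integral>\<^sup>+x. ennreal (exponential_density (lam + l0) x) \<partial>lborel)"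
    by (rule nn_integral_cmult) measurable
  also have "(\<integral>\<^sup>+x. ennreal (exponential_density (lam + l0) x) \<partial>lborel) = 1"
  proof -
    interpret exp_law: prob_space "density lborel (exponential_density (lam + l0))"
      by (rule prob_space_exponential_density) (use lam l0 in auto)
    show ?thesis using exp_law.emeasure_space_1 by (simp add: emeasure_density)
  qed
  finally show ?thesis by simp
qed

lemma lik_nonneg: "0 \<le> lik t \<omega>"
  unfolding Lproc_def using l0 l1 f_nonneg by (intro mult_nonneg_nonneg prod_nonneg) auto

lemma lik_ratio_nonneg: "0 \<le> lik_ratio s t \<omega>"
  unfolding Lratio_def using l0 l1 f_nonneg by (intro mult_nonneg_nonneg prod_nonneg) auto

lemma Phi_nonneg: "0 \<le> \<phi> \<Longrightarrow> 0 \<le> \<Phi> \<phi> t \<omega>"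
  unfolding Phi_def using lam lik_nonneg lik_ratio_nonneg
  by (intro add_nonneg_nonneg set_integral_nonneg_real mult_nonneg_nonneg) auto

lemma Phi_mono: "\<phi>1 \<le> \<phi>2 \<Longrightarrow> \<Phi> \<phi>1 t \<omega> \<le> \<Phi> \<phi>2 t \<omega>"
  unfolding Phi_def using lik_nonneg by (intro add_right_mono mult_right_mono) auto

lemma lik_eq_lik_ratio: "strict_arrivals \<omega> \<Longrightarrow> lik t \<omega> = lik_ratio 0 t \<omega>"
  unfolding Lproc_def Lratio_def using strict_arrivals_T_pos
  by (auto simp: X_start strict_arrivals_def intro!: prod.cong)

(* Up to the first arrival the likelihood ratio is bounded: X is bounded on the compact
   interval [0,T1] and at most one mark enters the product. *)
lemma lik_ratio_bounded_before_T1: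
  assumes \<omega>: "strict_arrivals \<omega>"
  obtains C where "\<And>s t. 0 \<le> s \<Longrightarrow> s \<le> t \<Longrightarrow> t \<le> T 1 \<omega> \<Longrightarrow> lik_ratio s t \<omega> \<le> C"
proof -
  have "compact ((\<lambda>t. X t \<omega>) ` {0..T 1 \<omega>})"
    using \<omega> unfolding strict_arrivals_def
    by (intro compact_continuous_image) (auto intro: continuous_on_subset[OF X_continuous])
  then have "bounded ((\<lambda>t. X t \<omega>) ` {0..T 1 \<omega>})" by (rule compact_imp_bounded)
  then obtain B where "\<forall>x\<in>(\<lambda>t. X t \<omega>) ` {0..T 1 \<omega>}. norm x \<le> B" unfolding bounded_iff by blast
  then have B: "\<And>t. t \<in> {0..T 1 \<omega>} \<Longrightarrow> \<bar>X t \<omega>\<bar> \<le> B" by auto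
  define jump where "jump n = l1 / l0 * f (Z n \<omega>)" for n
  have jump_nonneg: "0 \<le> jump n" for n unfolding jump_def using l0 l1 f_nonneg by simp
  show thesis
  proof (rule that)
    fix s t assume st: "0 \<le> s" "s \<le> t" "t \<le> T 1 \<omega>"
    have "exp (\<mu> * (X t \<omega> - X s \<omega>) - (\<mu>\<^sup>2 / 2 + l1 - l0) * (t - s))
        \<le> exp (2 * \<bar>\<mu>\<bar> * B + \<bar>\<mu>\<^sup>2 / 2 + l1 - l0\<bar> * T 1 \<omega>)"
      using st by (intro exp_mono linear_exponent_bound B) auto
    moreover have "0 \<le> (\<Prod>n\<in>{n. 1 \<le> n \<and> s < T n \<omega> \<and> T n \<omega> \<le> t}. jump n) \<and>
        (\<Prod>n\<in>{n. 1 \<le> n \<and> s < T n \<omega> \<and> T n \<omega> \<le> t}. jump n) \<le> max 1 (jump 1)"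
      using arrivals_before_T1[OF \<omega> st(3), of "\<lambda>n. s < T n \<omega>"]
      by (intro prod_subset_singleton_le jump_nonneg) simp
    ultimately show "lik_ratio s t \<omega> \<le> exp (2 * \<bar>\<mu>\<bar> * B + \<bar>\<mu>\<^sup>2 / 2 + l1 - l0\<bar> * T 1 \<omega>) * max 1 (jump 1)"
      unfolding Lratio_def jump_def by (intro mult_mono) auto
  qed
qed

lemma Phi_bounded_before_T1:
  assumes \<omega>: "strict_arrivals \<omega>" and \<phi>: "0 \<le> \<phi>"
  obtains C where "\<And>t. t \<in> {0..T 1 \<omega>} \<Longrightarrow> \<Phi> \<phi> t \<omega> \<le> C"
proof -
  obtain C where C: "\<And>s t. 0 \<le> s \<Longrightarrow> s \<le> t \<Longrightarrow> t \<le> T 1 \<omega> \<Longrightarrow> lik_ratio s t \<omega> \<le> C"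
    using lik_ratio_bounded_before_T1[OF \<omega>] by blast
  have C_nonneg: "0 \<le> C"
    using C[of 0 0] lik_ratio_nonneg[of 0 0 \<omega>] strict_arrivals_T1_pos[OF \<omega>] by linarith
  let ?E = "lam * exp (lam * T 1 \<omega>) * C"
  show thesis
  proof (rule that)
    fix t assume t: "t \<in> {0..T 1 \<omega>}"
    have "exp (lam * t) \<le> exp (lam * T 1 \<omega>)" using t lam by simp
    then have "\<phi> * exp (lam * t) * lik t \<omega> \<le> \<phi> * exp (lam * T 1 \<omega>) * C"
      using t \<phi> C[of 0 t] lik_ratio_nonneg unfolding lik_eq_lik_ratio[OF \<omega>]
      by (intro mult_mono mult_left_mono) auto
    moreover have "(LINT s:{0..t}|lborel. lam * exp (lam * (t - s)) * lik_ratio s t \<omega>) \<le> ?E * t"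
      using t lam C lik_ratio_nonneg C_nonneg
      by (intro set_integral_le_const_length) (auto intro!: mult_mono)
    moreover have "?E * t \<le> ?E * T 1 \<omega>"
      using t lam C_nonneg by (intro mult_left_mono) auto
    ultimately show "\<Phi> \<phi> t \<omega> \<le> \<phi> * exp (lam * T 1 \<omega>) * C + ?E * T 1 \<omega>"
      unfolding Phi_def by linarith
  qed
qed

lemma running_cost_integrable:
  assumes \<omega>: "strict_arrivals \<omega>" and \<phi>: "0 \<le> \<phi>" and a: "0 \<le> a" "a \<le> T 1 \<omega>"
  shows "set_integrable lborel {0..a} (\<lambda>t. exp (- lam * t) * (\<Phi> \<phi> t \<omega> - lam / c))"
proof -
  obtain C where C: "\<And>t. t \<in> {0..T 1 \<omega>} \<Longrightarrow> \<Phi> \<phi> t \<omega> \<le> C"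
    using Phi_bounded_before_T1[OF \<omega> \<phi>] by blast
  have [measurable]: "(\<lambda>t. \<Phi> \<phi> (max 0 t) \<omega>) \<in> borel_measurable lborel"
    using \<omega> by (intro Phi_measurable) (auto simp: strict_arrivals_def)
  have bound: "\<bar>exp (- lam * t) * (\<Phi> \<phi> t \<omega> - lam / c)\<bar> \<le> C + lam / c"
    if t: "t \<in> {0..a}" for t
  proof -
    have "0 < lam / c" "\<Phi> \<phi> t \<omega> \<le> C" using lam c t a by (auto intro: C)
    then have "\<bar>\<Phi> \<phi> t \<omega> - lam / c\<bar> \<le> C + lam / c"
      using Phi_nonneg[OF \<phi>, of t \<omega>] unfolding abs_le_iff by linarith
    moreover have "exp (- lam * t) \<le> 1" using t lam by auto
    ultimately have "exp (- lam * t) * \<bar>\<Phi> \<phi> t \<omega> - lam / c\<bar> \<le> 1 * (C + lam / c)"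
      by (intro mult_mono) auto
    then show ?thesis by (simp add: abs_mult)
  qed
  have "set_integrable lborel {0..a} (\<lambda>t. exp (- lam * t) * (\<Phi> \<phi> (max 0 t) \<omega> - lam / c))"
    unfolding set_integrable_def
    by (rule integrableI_bounded_set_indicator[where B="C + lam / c"]) (use a bound in auto)
  then show ?thesis by (rule set_integrable_cong[THEN iffD1, rotated -1]) auto
qed

definition horizon :: "('w \<Rightarrow> ereal) \<Rightarrow> 'w \<Rightarrow> real" where
  "horizon \<tau> \<omega> = real_of_ereal (min (\<tau> \<omega>) (ereal (T 1 \<omega>)))"

definition running_cost :: "real \<Rightarrow> real \<Rightarrow> 'w \<Rightarrow> real" where
  "running_cost \<phi> a \<omega> = (LINT t:{0..a}|lborel. exp (- lam * t) * (\<Phi> \<phi> t \<omega> - lam / c))"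

definition payoff :: "(real \<Rightarrow> real) \<Rightarrow> real \<Rightarrow> ('w \<Rightarrow> ereal) \<Rightarrow> 'w \<Rightarrow> real" where
  "payoff w \<phi> \<tau> \<omega> = running_cost \<phi> (horizon \<tau> \<omega>) \<omega> +
     (if ereal (T 1 \<omega>) \<le> \<tau> \<omega> then exp (- lam * T 1 \<omega>) * w (\<Phi> \<phi> (T 1 \<omega>) \<omega>) else 0)"

definition J_ereal :: "(real \<Rightarrow> real) \<Rightarrow> real \<Rightarrow> ereal" where
  "J_ereal w \<phi> = (INF \<tau>\<in>{\<tau>. FX_stopping_time M X \<tau>}. ext_expectation M (payoff w \<phi> \<tau>))"

lemma Jop_eq: "Jop M lam \<mu> l0 l1 c f X T Z w \<phi> = real_of_ereal (J_ereal w \<phi>)"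
  unfolding Jop_def J_ereal_def payoff_def[abs_def] running_cost_def horizon_def by simp

lemma horizon_bounds:
  assumes "0 \<le> \<tau> \<omega>" "0 < T 1 \<omega>"
  shows "0 \<le> horizon \<tau> \<omega>" "horizon \<tau> \<omega> \<le> T 1 \<omega>"
  using assms unfolding horizon_def by (cases "\<tau> \<omega>"; auto simp: min_def)+

lemma horizon_at_T1: "ereal (T 1 \<omega>) \<le> \<tau> \<omega> \<Longrightarrow> horizon \<tau> \<omega> = T 1 \<omega>"
  unfolding horizon_def by (simp add: min_def)

(* With w \<ge> -1/c the payoff is at least -1/c: the running cost contributes at least
   -(1 - e^{-lam a})/c up to the horizon a, the terminal payoff at least -e^{-lam a}/c. *)
lemma payoff_lower_bound:
  assumes st: "FX_stopping_time M X \<tau>" and w: "\<And>x. 0 \<le> x \<Longrightarrow> - (1 / c) \<le> w x" and \<phi>: "0 \<le> \<phi>"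
  shows "AE \<omega> in M. - (1 / c) \<le> payoff w \<phi> \<tau> \<omega>"
  using AE_strict_arrivals
proof eventually_elim
  case (elim \<omega>)
  define a where "a = horizon \<tau> \<omega>"
  have T1: "0 < T 1 \<omega>" by (rule strict_arrivals_T1_pos[OF elim])
  have a_nonneg: "0 \<le> a" unfolding a_def
    using horizon_bounds stopping_time_nonneg[OF st] elim T1 by (auto simp: strict_arrivals_def)
  have cost: "- (1 / c) * (1 - exp (- lam * a)) \<le> running_cost \<phi> a \<omega>"
    unfolding running_cost_def by (rule discounted_cost_lower_bound[OF lam c a_nonneg Phi_nonneg[OF \<phi>]])
  show ?case
  proof (cases "ereal (T 1 \<omega>) \<le> \<tau> \<omega>")
    case True
    then have "a = T 1 \<omega>" unfolding a_def by (rule horizon_at_T1)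
    moreover have "exp (- lam * T 1 \<omega>) * (- (1 / c)) \<le> exp (- lam * T 1 \<omega>) * w (\<Phi> \<phi> (T 1 \<omega>) \<omega>)"
      by (intro mult_left_mono w Phi_nonneg[OF \<phi>]) auto
    ultimately show ?thesis
      using True cost unfolding payoff_def a_def[symmetric] by (simp add: algebra_simps)
  next
    case False
    have "- (1 / c) \<le> - (1 / c) * (1 - exp (- lam * a))" using c by (simp add: field_simps)
    then show ?thesis using False cost unfolding payoff_def a_def[symmetric] by simp
  qed
qed

(* Stopping immediately costs nothing, since a.s. T1 > 0. *)
lemma payoff_stop_at_zero: "AE \<omega> in M. payoff w \<phi> (\<lambda>_. 0) \<omega> = 0"
  using AE_strict_arrivals
proof eventually_elim
  case (elim \<omega>)
  have T1: "0 < T 1 \<omega>" by (rule strict_arrivals_T1_pos[OF elim])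
  then have "horizon (\<lambda>_. 0) \<omega> = 0" by (simp add: horizon_def min_def)
  moreover have "running_cost \<phi> 0 \<omega> = 0"
    unfolding running_cost_def set_lebesgue_integral_def
    by (rule integral_eq_zero_AE) (rule AE_mp[OF AE_lborel_singleton[of 0]], auto)
  ultimately show ?case using T1 unfolding payoff_def by simp
qed

lemma payoff_mono_phi:
  assumes st: "FX_stopping_time M X \<tau>" and w: "mono_on {0..} w" and \<phi>: "0 \<le> \<phi>1" "\<phi>1 \<le> \<phi>2"
  shows "AE \<omega> in M. payoff w \<phi>1 \<tau> \<omega> \<le> payoff w \<phi>2 \<tau> \<omega>"
  using AE_strict_arrivals
proof eventually_elim
  case (elim \<omega>)
  define a where "a = horizon \<tau> \<omega>"
  have T1: "0 < T 1 \<omega>" by (rule strict_arrivals_T1_pos[OF elim])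
  have a: "0 \<le> a" "a \<le> T 1 \<omega>" unfolding a_def
    using horizon_bounds stopping_time_nonneg[OF st] elim T1 by (auto simp: strict_arrivals_def)
  have \<phi>2: "0 \<le> \<phi>2" using \<phi> by simp
  have "running_cost \<phi>1 a \<omega> \<le> running_cost \<phi>2 a \<omega>"
    unfolding running_cost_def
    by (intro set_integral_mono running_cost_integrable[OF elim \<phi>(1) a]
        running_cost_integrable[OF elim \<phi>2 a] mult_left_mono diff_right_mono Phi_mono \<phi>(2)) auto
  moreover have "exp (- lam * T 1 \<omega>) * w (\<Phi> \<phi>1 (T 1 \<omega>) \<omega>) \<le> exp (- lam * T 1 \<omega>) * w (\<Phi> \<phi>2 (T 1 \<omega>) \<omega>)"
    by (intro mult_left_mono mono_onD[OF w] Phi_mono \<phi>(2)) (auto intro: Phi_nonneg \<phi>(1) \<phi>2)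
  ultimately show ?case unfolding payoff_def a_def[symmetric] by (auto intro!: add_mono)
qed

lemma payoff_shift:
  assumes \<phi>: "0 \<le> \<phi>" and le: "\<And>x. 0 \<le> x \<Longrightarrow> w1 x \<le> w2 x + \<delta>" and \<delta>: "0 \<le> \<delta>"
  shows "payoff w1 \<phi> \<tau> \<omega> \<le> payoff w2 \<phi> \<tau> \<omega> + \<delta> * exp (- lam * T 1 \<omega>)"
proof -
  let ?P = "\<Phi> \<phi> (T 1 \<omega>) \<omega>"
  have "exp (- lam * T 1 \<omega>) * w1 ?P \<le> exp (- lam * T 1 \<omega>) * (w2 ?P + \<delta>)"
    by (intro mult_left_mono le Phi_nonneg[OF \<phi>]) auto
  then show ?thesis unfolding payoff_def using \<delta> by (simp add: algebra_simps)
qed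

lemma running_cost_measurable:
  assumes st: "FX_stopping_time M X \<tau>"
  shows "(\<lambda>\<omega>. running_cost \<phi> (horizon \<tau> \<omega>) \<omega>) \<in> borel_measurable M"
proof -
  have [measurable]: "\<tau> \<in> borel_measurable M" by (rule stopping_time_measurable[OF st])
  have [measurable]: "(\<lambda>y. \<Phi> \<phi> (max 0 (snd y)) (fst y)) \<in> borel_measurable (M \<Otimes>\<^sub>M borel)"
    by (rule Phi_measurable) measurable
  have "(\<lambda>(\<omega>, t). indicator {0..horizon \<tau> \<omega>} t *
      (exp (- lam * t) * (\<Phi> \<phi> (max 0 t) \<omega> - lam / c))) \<in> borel_measurable (M \<Otimes>\<^sub>M borel)"
    unfolding split_beta' indicator_def atLeastAtMost_iff horizon_def by measurable
  then have "(\<lambda>\<omega>. \<integral>t. indicator {0..horizon \<tau> \<omega>} t *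
      (exp (- lam * t) * (\<Phi> \<phi> (max 0 t) \<omega> - lam / c)) \<partial>lborel) \<in> borel_measurable M"
    by (intro lborel.borel_measurable_lebesgue_integral) (simp only: borel_measurable_pair_lborel)
  moreover have "running_cost \<phi> (horizon \<tau> \<omega>) \<omega> = (\<integral>t. indicator {0..horizon \<tau> \<omega>} t *
      (exp (- lam * t) * (\<Phi> \<phi> (max 0 t) \<omega> - lam / c)) \<partial>lborel)" for \<omega>
    unfolding running_cost_def set_lebesgue_integral_def
    by (intro Bochner_Integration.integral_cong) (auto split: split_indicator)
  ultimately show ?thesis by simp
qed

(* A nondecreasing w is Borel on [0,\<infinity>), so the payoff agrees a.e. with a measurable
   function; this is where monotonicity of admissible functions is used. *)
lemma payoff_AE_measurable:
  assumes st: "FX_stopping_time M X \<tau>" and w: "mono_on {0..} w" and \<phi>: "0 \<le> \<phi>"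
  obtains Y where "Y \<in> borel_measurable M" "AE \<omega> in M. payoff w \<phi> \<tau> \<omega> = Y \<omega>"
proof -
  have [measurable]: "\<tau> \<in> borel_measurable M" by (rule stopping_time_measurable[OF st])
  define w' where "w' x = w (max 0 x)" for x
  have "mono w'" unfolding w'_def by (intro monoI mono_onD[OF w]) auto
  then have [measurable]: "w' \<in> borel_measurable borel" by (rule borel_measurable_mono)
  have [measurable]: "(\<lambda>\<omega>. running_cost \<phi> (horizon \<tau> \<omega>) \<omega>) \<in> borel_measurable M"
    by (rule running_cost_measurable[OF st])
  let ?Y = "\<lambda>\<omega>. running_cost \<phi> (horizon \<tau> \<omega>) \<omega> + (if ereal (T 1 \<omega>) \<le> \<tau> \<omega>
      then exp (- lam * T 1 \<omega>) * w' (\<Phi> \<phi> (max 0 (T 1 \<omega>)) \<omega>) else 0)"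
  show thesis
  proof (rule that)
    show "?Y \<in> borel_measurable M" by measurable
    show "AE \<omega> in M. payoff w \<phi> \<tau> \<omega> = ?Y \<omega>"
      using AE_strict_arrivals
    proof eventually_elim
      case (elim \<omega>)
      then have "max 0 (T 1 \<omega>) = T 1 \<omega>" using strict_arrivals_T1_pos by fastforce
      then show ?case unfolding payoff_def w'_def using Phi_nonneg[OF \<phi>] by (simp add: max_absorb2)
    qed
  qed
qed

definition admissible :: "(real \<Rightarrow> real) \<Rightarrow> bool" where
  "admissible w \<longleftrightarrow> (\<forall>x\<ge>0. - (1 / c) \<le> w x \<and> w x \<le> 0) \<and> mono_on {0..} w"

lemma admissible_lower: "admissible w \<Longrightarrow> 0 \<le> x \<Longrightarrow> - (1 / c) \<le> w x"
  and admissible_mono: "admissible w \<Longrightarrow> mono_on {0..} w"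
  by (simp_all add: admissible_def)

(* For admissible w, J w takes values in [-1/c, 0] (by payoff_lower_bound and by
   stopping at once), and is nondecreasing in \<phi> (by payoff_mono_phi). *)
lemma J_ereal_bounds:
  assumes w: "admissible w" and \<phi>: "0 \<le> \<phi>"
  shows "- ereal (1 / c) \<le> J_ereal w \<phi>" "J_ereal w \<phi> \<le> 0"
proof -
  show "- ereal (1 / c) \<le> J_ereal w \<phi>" unfolding J_ereal_def
  proof (rule INF_greatest)
    fix \<tau> assume "\<tau> \<in> {\<tau>. FX_stopping_time M X \<tau>}"
    then show "- ereal (1 / c) \<le> ext_expectation M (payoff w \<phi> \<tau>)"
      using c by (intro ext_expectation_lower_bound payoff_lower_bound admissible_lower[OF w] \<phi>) auto
  qed
  have "J_ereal w \<phi> \<le> ext_expectation M (payoff w \<phi> (\<lambda>_. 0))"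
    unfolding J_ereal_def by (rule INF_lower) (simp add: stopping_time_zero)
  also have "\<dots> = ext_expectation M (\<lambda>_. 0)" by (rule ext_expectation_cong_AE[OF payoff_stop_at_zero])
  also have "\<dots> = 0" by (simp add: ext_expectation_def)
  finally show "J_ereal w \<phi> \<le> 0" .
qed

lemma J_ereal_mono:
  assumes w: "admissible w" and \<phi>: "0 \<le> \<phi>1" "\<phi>1 \<le> \<phi>2"
  shows "J_ereal w \<phi>1 \<le> J_ereal w \<phi>2"
  unfolding J_ereal_def
proof (rule INF_mono)
  fix \<tau> assume "\<tau> \<in> {\<tau>. FX_stopping_time M X \<tau>}"
  then have st: "FX_stopping_time M X \<tau>" by simp
  have "ext_expectation M (payoff w \<phi>1 \<tau>) \<le> ext_expectation M (payoff w \<phi>2 \<tau>)"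
    by (rule ext_expectation_mono_AE[OF payoff_mono_phi[OF st admissible_mono[OF w] \<phi>]])
  then show "\<exists>\<sigma>\<in>{\<tau>. FX_stopping_time M X \<tau>}.
      ext_expectation M (payoff w \<phi>1 \<sigma>) \<le> ext_expectation M (payoff w \<phi>2 \<tau>)"
    using st by blast
qed

lemma Jop_admissible:
  assumes w: "admissible w"
  shows "admissible (Jop M lam \<mu> l0 l1 c f X T Z w)"
  unfolding admissible_def Jop_eq
proof (intro conjI allI impI mono_onI)
  fix x :: real assume x: "0 \<le> x"
  show "- (1 / c) \<le> real_of_ereal (J_ereal w x)" "real_of_ereal (J_ereal w x) \<le> 0"
    using ereal_between_real[OF J_ereal_bounds[OF w x]] by simp_all
next
  fix x y :: real assume "x \<in> {0..}" "y \<in> {0..}" "x \<le> y"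
  then have "J_ereal w x \<le> J_ereal w y" using J_ereal_mono[OF w] by simp
  moreover have "J_ereal w x = ereal (real_of_ereal (J_ereal w x))"
    "J_ereal w y = ereal (real_of_ereal (J_ereal w y))"
    using \<open>x \<in> {0..}\<close> \<open>y \<in> {0..}\<close> by (auto intro: ereal_between_real(1)[OF J_ereal_bounds[OF w]])
  ultimately show "real_of_ereal (J_ereal w x) \<le> real_of_ereal (J_ereal w y)"
    by (metis ereal_less_eq(3))
qed

lemma expected_discount:
  assumes \<delta>: "0 \<le> \<delta>"
  shows "integrable M (\<lambda>\<omega>. \<delta> * exp (- lam * T 1 \<omega>))"
    "(\<integral>\<omega>. \<delta> * exp (- lam * T 1 \<omega>) \<partial>M) = \<delta> * (l0 / (lam + l0))"
proof -
  have q: "0 \<le> l0 / (lam + l0)" using lam l0 by simp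
  have "0 \<le> \<delta> * (l0 / (lam + l0))" using \<delta> q by (rule mult_nonneg_nonneg)
  have "(\<integral>\<^sup>+\<omega>. ennreal (\<delta> * exp (- lam * T 1 \<omega>)) \<partial>M)
      = (\<integral>\<^sup>+\<omega>. ennreal \<delta> * ennreal (exp (- lam * T 1 \<omega>)) \<partial>M)"
    using \<delta> by (intro nn_integral_cong) (simp add: ennreal_mult)
  also have "\<dots> = ennreal \<delta> * (\<integral>\<^sup>+\<omega>. ennreal (exp (- lam * T 1 \<omega>)) \<partial>M)"
    by (rule nn_integral_cmult) measurable
  also have "\<dots> = ennreal (\<delta> * (l0 / (lam + l0)))"
    unfolding laplace_T1 by (rule ennreal_mult[OF \<delta> q, symmetric])
  finally have nn: "(\<integral>\<^sup>+\<omega>. ennreal (\<delta> * exp (- lam * T 1 \<omega>)) \<partial>M) = ennreal (\<delta> * (l0 / (lam + l0)))" .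
  show int: "integrable M (\<lambda>\<omega>. \<delta> * exp (- lam * T 1 \<omega>))"
    using nn \<delta> by (intro integrableI_nonneg) auto
  show "(\<integral>\<omega>. \<delta> * exp (- lam * T 1 \<omega>) \<partial>M) = \<delta> * (l0 / (lam + l0))"
    using integral_eq_nn_integral[of "\<lambda>\<omega>. \<delta> * exp (- lam * T 1 \<omega>)" M] nn \<delta> q
      \<open>0 \<le> \<delta> * (l0 / (lam + l0))\<close> by simp
qed

lemma payoff_expectation_shift:
  assumes st: "FX_stopping_time M X \<tau>" and w1: "admissible w1" and w2: "admissible w2"
    and le: "\<And>x. 0 \<le> x \<Longrightarrow> w1 x \<le> w2 x + \<delta>" and \<phi>: "0 \<le> \<phi>" and \<delta>: "0 \<le> \<delta>"
  shows "ext_expectation M (payoff w1 \<phi> \<tau>) \<le>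
    ext_expectation M (payoff w2 \<phi> \<tau>) + ereal (\<delta> * (l0 / (lam + l0)))"
proof -
  obtain Y1 where Y1[measurable]: "Y1 \<in> borel_measurable M" and ae1: "AE \<omega> in M. payoff w1 \<phi> \<tau> \<omega> = Y1 \<omega>"
    using payoff_AE_measurable[OF st admissible_mono[OF w1] \<phi>] by blast
  obtain Y2 where Y2[measurable]: "Y2 \<in> borel_measurable M" and ae2: "AE \<omega> in M. payoff w2 \<phi> \<tau> \<omega> = Y2 \<omega>"
    using payoff_AE_measurable[OF st admissible_mono[OF w2] \<phi>] by blast
  have lb1: "AE \<omega> in M. - (1 / c) \<le> payoff w1 \<phi> \<tau> \<omega>"
    by (rule payoff_lower_bound[OF st admissible_lower[OF w1] \<phi>])
  have lb2: "AE \<omega> in M. - (1 / c) \<le> payoff w2 \<phi> \<tau> \<omega>"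
    by (rule payoff_lower_bound[OF st admissible_lower[OF w2] \<phi>])
  have "ext_expectation M Y1 \<le> ext_expectation M Y2 + ereal (\<integral>\<omega>. \<delta> * exp (- lam * T 1 \<omega>) \<partial>M)"
  proof (rule ext_expectation_le_add[OF Y1 Y2 _ _ _ expected_discount(1)[OF \<delta>]])
    show "AE \<omega> in M. Y1 \<omega> \<le> Y2 \<omega> + \<delta> * exp (- lam * T 1 \<omega>)"
      using ae1 ae2
    proof eventually_elim
      case (elim \<omega>)
      then show ?case using payoff_shift[where ?w1.0=w1 and ?w2.0=w2 and \<tau>=\<tau> and \<omega>=\<omega>, OF \<phi> le \<delta>] by linarith
    qed
    show "AE \<omega> in M. - (1 / c) \<le> Y1 \<omega>" using ae1 lb1 by eventually_elim simp
    show "AE \<omega> in M. - (1 / c) \<le> Y2 \<omega>" using ae2 lb2 by eventually_elim simp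
    show "(\<lambda>\<omega>. \<delta> * exp (- lam * T 1 \<omega>)) \<in> borel_measurable M" by measurable
    show "AE \<omega> in M. 0 \<le> \<delta> * exp (- lam * T 1 \<omega>)" using \<delta> by simp
  qed (use c in simp)
  then show ?thesis
    using ext_expectation_cong_AE[OF ae1] ext_expectation_cong_AE[OF ae2] expected_discount(2)[OF \<delta>]
    by simp
qed

lemma Jop_shift:
  assumes w1: "admissible w1" and w2: "admissible w2"
    and le: "\<And>x. 0 \<le> x \<Longrightarrow> w1 x \<le> w2 x + \<delta>" and \<phi>: "0 \<le> \<phi>" and \<delta>: "0 \<le> \<delta>"
  shows "Jop M lam \<mu> l0 l1 c f X T Z w1 \<phi> \<le> Jop M lam \<mu> l0 l1 c f X T Z w2 \<phi> + l0 / (lam + l0) * \<delta>"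
proof -
  let ?s = "ereal (\<delta> * (l0 / (lam + l0)))"
  have "J_ereal w1 \<phi> - ?s \<le> J_ereal w2 \<phi>"
    unfolding J_ereal_def[of w2]
  proof (rule INF_greatest)
    fix \<tau> assume "\<tau> \<in> {\<tau>. FX_stopping_time M X \<tau>}"
    then have st: "FX_stopping_time M X \<tau>" by simp
    have "J_ereal w1 \<phi> \<le> ext_expectation M (payoff w1 \<phi> \<tau>)"
      unfolding J_ereal_def by (rule INF_lower) (simp add: st)
    also have "\<dots> \<le> ext_expectation M (payoff w2 \<phi> \<tau>) + ?s"
      by (rule payoff_expectation_shift[OF st w1 w2 le \<phi> \<delta>])
    finally show "J_ereal w1 \<phi> - ?s \<le> ext_expectation M (payoff w2 \<phi> \<tau>)"
      by (simp add: ereal_le_plus_real_iff)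
  qed
  then have "J_ereal w1 \<phi> \<le> J_ereal w2 \<phi> + ?s" by (simp add: ereal_le_plus_real_iff)
  moreover have "J_ereal w1 \<phi> = ereal (real_of_ereal (J_ereal w1 \<phi>))"
    "J_ereal w2 \<phi> = ereal (real_of_ereal (J_ereal w2 \<phi>))"
    by (rule ereal_between_real(1)[OF J_ereal_bounds[OF w1 \<phi>]],
        rule ereal_between_real(1)[OF J_ereal_bounds[OF w2 \<phi>]])
  ultimately have "real_of_ereal (J_ereal w1 \<phi>) \<le> real_of_ereal (J_ereal w2 \<phi>) + \<delta> * (l0 / (lam + l0))"
    by (metis ereal_less_eq(3) plus_ereal.simps(1))
  then show ?thesis unfolding Jop_eq by (simp add: mult.commute)
qed

end

theorem lemma3p2:
  fixes M :: "'w measure" and \<nu>0 \<nu>1 :: "'e measure"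
    and X :: "real \<Rightarrow> 'w \<Rightarrow> real" and T :: "nat \<Rightarrow> 'w \<Rightarrow> real" and Z :: "nat \<Rightarrow> 'w \<Rightarrow> 'e"
    and lam l0 l1 \<mu> c :: real and f :: "'e \<Rightarrow> real"
    and v :: "nat \<Rightarrow> real \<Rightarrow> real" and v_inf :: "real \<Rightarrow> real"
  assumes "lam > 0" and "l0 > 0" and "l1 > 0" and "\<mu> \<noteq> 0" and "c > 0"
    and "prob_space \<nu>0" and "prob_space \<nu>1" and "sets \<nu>1 = sets \<nu>0"
    and "absolutely_continuous \<nu>0 \<nu>1"
    and "f = (\<lambda>x. enn2real (RN_deriv \<nu>0 \<nu>1 x))"
    and "prob_space M"
    and "wiener_process M X"
    and "marked_poisson M l0 \<nu>0 T Z"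
    and "indep_rv M
           (PiM {0..} (\<lambda>_. borel)) (\<lambda>\<omega>. restrict (\<lambda>t. X t \<omega>) {0..})
           (PiM {1..} (\<lambda>_. borel \<Otimes>\<^sub>M \<nu>0)) (\<lambda>\<omega>. restrict (\<lambda>n. (T n \<omega>, Z n \<omega>)) {1..})"
    and "v = (\<lambda>n. (Jop M lam \<mu> l0 l1 c f X T Z ^^ n) (\<lambda>_. 0))"
    and "v_inf = (\<lambda>\<phi>. lim (\<lambda>n. v n \<phi>))"
  shows "(\<forall>n \<phi>. 0 \<le> \<phi> \<longrightarrow>
            v_inf \<phi> \<le> v n \<phi> \<and> v n \<phi> \<le> v_inf \<phi> + 1 / c * (l0 / (lam + l0)) ^ n)
         \<and> uniform_limit {0..} v v_inf sequentially"
proof -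
  interpret disorder_model M \<nu>0 X T Z lam l0 l1 \<mu> c f
    by unfold_locales (use assms in auto)
  interpret one_sided_contraction "Jop M lam \<mu> l0 l1 c f X T Z" "Collect admissible" "{0..}"
    "1 / c" "l0 / (lam + l0)"
  proof
    show "(\<lambda>_. 0) \<in> Collect admissible" using \<open>c > 0\<close> by (auto simp: admissible_def intro: mono_onI)
    show "Jop M lam \<mu> l0 l1 c f X T Z w \<in> Collect admissible" if "w \<in> Collect admissible" for w
      using that Jop_admissible by simp
    show "- (1 / c) \<le> w x \<and> w x \<le> 0" if "w \<in> Collect admissible" "x \<in> {0..}" for w x
      using that by (simp add: admissible_def)
    show "Jop M lam \<mu> l0 l1 c f X T Z w1 x \<le> Jop M lam \<mu> l0 l1 c f X T Z w2 x + l0 / (lam + l0) * \<delta>"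
      if "w1 \<in> Collect admissible" "w2 \<in> Collect admissible" "0 \<le> \<delta>"
        "\<And>y. y \<in> {0..} \<Longrightarrow> w1 y \<le> w2 y + \<delta>" "x \<in> {0..}" for w1 w2 \<delta> x
      using that by (intro Jop_shift) auto
  qed (use assms in auto)
  show ?thesis
    using iterate_converges(2) iterate_error_bound iterate_uniform_limit
    unfolding assms(15,16) by auto
qed

end
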